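(* For all $\zeta\in\mathbb{C}$ with $|\Im\zeta|\le\pi/2$, \[ \frac{1}{\sqrt2}\left|\frac{e^\zeta}{1+e^\zeta}\right|\le\left|\frac{\operatorname{arcsinh}(e^\zeta)}{1+\operatorname{arcsinh}(e^\zeta)}\right|\le\sqrt2\left|\frac{e^\zeta}{1+e^\zeta}\right|, \] and for all $x\in\mathbb{R}$, $\frac{\operatorname{arcsinh}(e^x)}{1+\operatorname{arcsinh}(e^x)}\le\frac{e^x}{1+e^x}$.
   Context: $\operatorname{arcsinh}$ denotes the principal branch, $\operatorname{arcsinh}(w)=\log(w+\sqrt{1+w^2})$, extended continuously to the boundary $|\Im\zeta|=\pi/2$. *)

theory Defs
  imports "HOL-Analysis.Analysis"
begin

text \<open>The principal branch arcsinh(w) = log(w + sqrt(1+w^2)) is the library's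
  arsinh on complex numbers (principal Ln, principal square root via powr 1/2).\<close>

definition arcsinh_exp :: "complex \<Rightarrow> complex" where
  "arcsinh_exp \<zeta> =
     (if \<bar>Im \<zeta>\<bar> < pi / 2 then arsinh (exp \<zeta>)
      else Lim (at \<zeta> within {z. \<bar>Im z\<bar> < pi / 2}) (\<lambda>z. arsinh (exp z)))"

end

theory Submission
  imports Defs "HOL-Complex_Analysis.Complex_Analysis"
begin

(* Put a = arcsinh(e^zeta) and w = e^zeta. Then a lies in the half-strip Re a >= 0, |Im a| <= pi/2,
   and sinh a = w. The function 1/sinh a - 1/a has a removable singularity at 0; the maximum
   modulus principle on the rectangle [0,5] x [-pi/2,pi/2], together with elementary estimates on
   its four edges (and a trivial one for Re a >= 5), bounds it by c = 0.4142 < sqrt 2 - 1 on the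
   whole half-strip. Since z/(1+z) = 1/(1 + 1/z) and |1 + 1/z| >= 1 when Re z >= 0, the triangle
   inequality gives |1 + 1/a| <= (1 + c) |1 + 1/w| and vice versa, hence both bounds with the
   factor sqrt 2. The real inequality follows from arsinh y <= y and monotonicity of t/(1+t). *)

section \<open>The hyperbolic sine on the half-strip\<close>

lemma Re_sinh_complex: "Re (sinh z) = sinh (Re z) * cos (Im z)" for z :: complex
  by (simp add: sinh_field_def sinh_def Re_exp Im_exp algebra_simps diff_divide_distrib[symmetric])

lemma Im_sinh_complex: "Im (sinh z) = cosh (Re z) * sin (Im z)" for z :: complex
  by (simp add: sinh_field_def cosh_def Re_exp Im_exp algebra_simps add_divide_distrib[symmetric])

lemma norm_sinh_complex_squared: "cmod (sinh z) ^ 2 = sinh (Re z) ^ 2 + sin (Im z) ^ 2"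
  for z :: complex
proof -
  have "cmod (sinh z) ^ 2 = (sinh (Re z) * cos (Im z))^2 + (cosh (Re z) * sin (Im z))^2"
    by (simp add: cmod_power2 Re_sinh_complex Im_sinh_complex)
  then show ?thesis
    by (simp add: cosh_square_eq cos_squared_eq algebra_simps)
qed

lemma sinh_complex_nonzero:
  fixes z :: complex assumes "z \<noteq> 0" "\<bar>Im z\<bar> < pi"
  shows "sinh z \<noteq> 0"
proof
  assume "sinh z = 0"
  then have "sinh (Re z) = 0" "sin (Im z) = 0"
    using norm_sinh_complex_squared[of z] by (simp_all add: add_nonneg_eq_0_iff)
  then have "Re z = 0" "Im z = 0" using sin_zero_pi_iff[OF assms(2)] by auto
  then show False using assms(1) by (simp add: complex_eq_iff)
qed

lemma real_le_sinh: "0 \<le> x \<Longrightarrow> x \<le> sinh x" for x :: real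
  using real_le_x_sinh[of x] by (simp add: sinh_field_def exp_minus)

lemma Re_le_norm_sinh:
  fixes z :: complex assumes "0 \<le> Re z"
  shows "Re z \<le> cmod (sinh z)"
proof (rule power2_le_imp_le)
  have "Re z ^ 2 \<le> sinh (Re z) ^ 2" using assms real_le_sinh by (intro power_mono) auto
  then show "Re z ^ 2 \<le> cmod (sinh z) ^ 2" by (simp add: norm_sinh_complex_squared add_increasing2)
qed simp

lemma holomorphic_on_sinh: "sinh holomorphic_on (S :: complex set)"
  by (rule holomorphic_on_open[THEN iffD2, OF open_UNIV, THEN holomorphic_on_subset])
     (auto intro!: derivative_eq_intros)

lemma arsinh_right_half_plane:
  fixes w :: complex assumes "0 < Re w"
  shows "sinh (arsinh w) = w" "\<bar>Im (arsinh w)\<bar> < pi/2" "0 < Re (arsinh w)"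
proof -
  define r where "r = csqrt (w^2 + 1)"
  have ar: "arsinh w = Ln (w + r)"
    unfolding arsinh_def r_def by (simp add: csqrt_conv_powr)
  have "0 \<le> Re r" unfolding r_def by (rule Re_csqrt)
  then have pos: "0 < Re (w + r)" using assms by simp
  then have nz: "w + r \<noteq> 0" by (metis less_irrefl zero_complex.sel(1))
  have "(w + r) * (r - w) = 1"
    by (simp add: r_def algebra_simps power2_eq_square[symmetric])
  then have inv: "inverse (w + r) = r - w" using nz by (simp add: inverse_unique)
  show sinh: "sinh (arsinh w) = w"
    unfolding ar sinh_field_def exp_minus exp_Ln[OF nz] inv by simp
  show im: "\<bar>Im (arsinh w)\<bar> < pi/2" unfolding ar by (rule Re_Ln_pos_lt_imp[OF pos])
  have "0 < cos (Im (arsinh w))" using im by (intro cos_gt_zero_pi) auto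
  moreover have "0 < Re (sinh (arsinh w))" using sinh assms by simp
  ultimately show "0 < Re (arsinh w)" by (simp add: Re_sinh_complex zero_less_mult_iff)
qed

lemma Re_exp_pos_strip: "\<bar>Im z\<bar> < pi/2 \<Longrightarrow> 0 < Re (exp z)" for z :: complex
  by (simp add: Re_exp cos_gt_zero_pi abs_less_iff)

definition half_strip :: "complex set" where
  "half_strip = {a. 0 \<le> Re a \<and> \<bar>Im a\<bar> \<le> pi/2}"

lemma inj_on_sinh_half_strip: "inj_on sinh half_strip"
proof (rule inj_onI)
  fix a b assume a: "a \<in> half_strip" and b: "b \<in> half_strip" and eq: "sinh a = sinh b"
  have ima: "\<bar>Im a\<bar> \<le> pi/2" and imb: "\<bar>Im b\<bar> \<le> pi/2"
    using a b by (auto simp: half_strip_def)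
  from eq obtain n where n: "n \<in> \<int>" and
    "a = b - 2 * \<i> * of_real n * of_real pi \<or> a = -(2 * of_real n + 1) * \<i> * of_real pi - b"
    by (auto simp: sinh_complex_eq_iff)
  then consider "Re a = Re b" "Im a = Im b - 2 * n * pi"
    | "Re a = - Re b" "Im a = - (2 * n + 1) * pi - Im b"
    by (auto simp: complex_eq_iff algebra_simps)
  then show "a = b"
  proof cases
    case 1
    with ima imb have "\<bar>2 * n * pi\<bar> \<le> pi" unfolding abs_le_iff by linarith
    then have "\<bar>2 * n\<bar> \<le> 1" by (simp add: abs_mult mult_le_cancel_right1)
    with n have "n = 0" by (auto elim!: Ints_cases)
    with 1 show "a = b" by (simp add: complex_eq_iff)
  next
    case 2
    then have "Re a = 0" "Re b = 0" using a b by (auto simp: half_strip_def)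
    with 2 ima imb have "\<bar>(2 * n + 1) * pi\<bar> \<le> pi" unfolding abs_le_iff by linarith
    then have "\<bar>2 * n + 1\<bar> \<le> 1" by (simp add: abs_mult mult_le_cancel_right1)
    with n have "n = 0 \<or> n = -1" by (auto elim!: Ints_cases)
    with 2 ima imb have "Im a = Im b" by auto
    with \<open>Re a = 0\<close> \<open>Re b = 0\<close> show "a = b" by (simp add: complex_eq_iff)
  qed
qed

lemma tendsto_inverse_on_compact:
  fixes f :: "'a::topological_space \<Rightarrow> 'b::t2_space"
  assumes K: "compact K" "continuous_on K f" "inj_on f K"
    and ev: "eventually (\<lambda>x. g x \<in> K \<and> f (g x) = h x) F"
    and lim: "(h \<longlongrightarrow> l) F" and nontriv: "\<not> trivial_limit F"
  shows "\<exists>y\<in>K. f y = l \<and> (g \<longlongrightarrow> y) F"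
proof -
  define \<phi> where "\<phi> = the_inv_into K f"
  have cont: "continuous_on (f ` K) \<phi>"
    unfolding \<phi>_def using K(2,1,3) by (rule continuous_on_inv_into)
  have evK: "eventually (\<lambda>x. h x \<in> f ` K) F"
    using ev by eventually_elim (metis image_eqI)
  have "closed (f ` K)" using K by (intro compact_imp_closed compact_continuous_image)
  then have l: "l \<in> f ` K" using Lim_in_closed_set[OF _ evK nontriv lim] by simp
  have "((\<lambda>x. \<phi> (h x)) \<longlongrightarrow> \<phi> l) F"
    by (rule continuous_on_tendsto_compose[OF cont lim l evK])
  moreover have "eventually (\<lambda>x. \<phi> (h x) = g x) F"
    using ev by eventually_elim (metis \<phi>_def the_inv_into_f_f[OF K(3)])
  ultimately have "(g \<longlongrightarrow> \<phi> l) F" by (rule Lim_transform_eventually)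
  moreover have "\<phi> l \<in> K" "f (\<phi> l) = l"
    unfolding \<phi>_def using K(3) l by (auto intro: the_inv_into_into f_the_inv_into_f)
  ultimately show ?thesis by blast
qed

lemma strip_boundary_islimpt:
  fixes \<zeta> :: complex assumes "\<bar>Im \<zeta>\<bar> = pi/2"
  shows "\<zeta> islimpt {z. \<bar>Im z\<bar> < pi/2}"
proof (rule islimpt_approachable[THEN iffD2], intro allI impI)
  fix e :: real assume "0 < e"
  define d where "d = min (e/2) 1"
  have d: "0 < d" "d < e" "d \<le> 1" using \<open>0 < e\<close> by (auto simp: d_def)
  define z where "z = \<zeta> - \<i> * of_real (sgn (Im \<zeta>) * d)"
  have sgn: "sgn (Im \<zeta>) = 1 \<or> sgn (Im \<zeta>) = -1" using assms pi_gt_zero by (auto simp: sgn_if)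
  have "\<bar>Im z\<bar> < pi/2" using sgn assms d pi_gt3 by (auto simp: z_def sgn_if split: if_splits)
  moreover have "z \<noteq> \<zeta>" "dist z \<zeta> < e"
    using sgn d by (auto simp: z_def complex_eq_iff dist_norm norm_mult)
  ultimately show "\<exists>z\<in>{z. \<bar>Im z\<bar> < pi/2}. z \<noteq> \<zeta> \<and> dist z \<zeta> < e" by blast
qed

lemma arsinh_exp_strip_boundary:
  fixes \<zeta> :: complex
  defines "F \<equiv> at \<zeta> within {z. \<bar>Im z\<bar> < pi/2}"
  assumes "\<bar>Im \<zeta>\<bar> = pi/2"
  shows "\<exists>a\<in>half_strip. sinh a = exp \<zeta> \<and> ((\<lambda>z. arsinh (exp z)) \<longlongrightarrow> a) F \<and> \<not> trivial_limit F"
proof -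
  define M where "M = cmod (exp \<zeta>) + 1"
  define K where "K = cbox (Complex 0 (-pi/2)) (Complex M (pi/2))"
  have KH: "K \<subseteq> half_strip"
    by (auto simp: K_def half_strip_def in_cbox_complex_iff abs_le_iff)
  have nontriv: "\<not> trivial_limit F"
    unfolding F_def trivial_limit_within using strip_boundary_islimpt[OF assms(2)] by simp
  have lim: "(exp \<longlongrightarrow> exp \<zeta>) F" unfolding F_def by (intro tendsto_intros)
  have "eventually (\<lambda>z. dist (exp z) (exp \<zeta>) < 1) F" by (rule tendstoD[OF lim]) simp
  moreover have "eventually (\<lambda>z. \<bar>Im z\<bar> < pi/2) F" by (simp add: F_def eventually_at_filter)
  ultimately have ev: "eventually (\<lambda>z. arsinh (exp z) \<in> K \<and> sinh (arsinh (exp z)) = exp z) F"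
  proof eventually_elim
    case (elim z)
    note arsinh = arsinh_right_half_plane[OF Re_exp_pos_strip[OF elim(2)]]
    have "Re (arsinh (exp z)) \<le> cmod (exp z)"
      using Re_le_norm_sinh[of "arsinh (exp z)"] arsinh by simp
    also have "\<dots> \<le> M"
      using elim(1) norm_triangle_ineq2[of "exp z" "exp \<zeta>"] by (simp add: M_def dist_norm)
    finally show ?case using arsinh by (auto simp: K_def in_cbox_complex_iff abs_less_iff)
  qed
  have "compact K" by (simp add: K_def)
  moreover have "continuous_on K sinh" by (intro continuous_intros)
  moreover have "inj_on sinh K" using inj_on_sinh_half_strip KH by (rule inj_on_subset)
  ultimately obtain a where "a \<in> K" "sinh a = exp \<zeta>" "((\<lambda>z. arsinh (exp z)) \<longlongrightarrow> a) F"
    by (metis tendsto_inverse_on_compact[OF _ _ _ ev lim nontriv])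
  with KH nontriv show ?thesis by blast
qed

lemma arcsinh_exp_in_half_strip:
  fixes \<zeta> :: complex assumes "\<bar>Im \<zeta>\<bar> \<le> pi/2"
  shows "arcsinh_exp \<zeta> \<in> half_strip" "sinh (arcsinh_exp \<zeta>) = exp \<zeta>"
proof -
  have "arcsinh_exp \<zeta> \<in> half_strip \<and> sinh (arcsinh_exp \<zeta>) = exp \<zeta>"
  proof (cases "\<bar>Im \<zeta>\<bar> < pi/2")
    case True
    then show ?thesis
      using arsinh_right_half_plane[OF Re_exp_pos_strip[OF True]]
      by (auto simp: arcsinh_exp_def half_strip_def)
  next
    case False
    with assms have "\<bar>Im \<zeta>\<bar> = pi/2" by simp
    from arsinh_exp_strip_boundary[OF this] obtain a where "a \<in> half_strip" "sinh a = exp \<zeta>"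
      and "((\<lambda>z. arsinh (exp z)) \<longlongrightarrow> a) (at \<zeta> within {z. \<bar>Im z\<bar> < pi/2})"
      and "\<not> trivial_limit (at \<zeta> within {z. \<bar>Im z\<bar> < pi/2})"
      by blast
    then have "arcsinh_exp \<zeta> = a" using False by (simp add: arcsinh_exp_def tendsto_Lim)
    with \<open>a \<in> half_strip\<close> \<open>sinh a = exp \<zeta>\<close> show ?thesis by simp
  qed
  then show "arcsinh_exp \<zeta> \<in> half_strip" "sinh (arcsinh_exp \<zeta>) = exp \<zeta>" by auto
qed

section \<open>The bound on 1/sinh a - 1/a\<close>

(* A rational just below sqrt 2 - 1 = 0.41421..., so that 1 + inv_sinh_gap_bound <= sqrt 2. *)
definition inv_sinh_gap_bound :: real where
  "inv_sinh_gap_bound = 2071/5000"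

lemma one_plus_inv_sinh_gap_bound_le_sqrt2: "1 + inv_sinh_gap_bound \<le> sqrt 2"
  by (rule real_le_rsqrt) (simp add: inv_sinh_gap_bound_def power2_eq_square)

lemma pi_bounds: "314159/100000 \<le> pi" "pi \<le> 3927/1250"
  using pi_approx by simp_all

lemma pi_squared_bounds: "98695/10000 \<le> pi^2" "pi^2 \<le> 98697/10000"
proof -
  have "314159/100000 * (314159/100000) \<le> pi * pi" using pi_bounds by (intro mult_mono) auto
  then show "98695/10000 \<le> pi^2" by (simp add: power2_eq_square)
  have "pi * pi \<le> 3927/1250 * (3927/1250)" using pi_bounds by (intro mult_mono) auto
  then show "pi^2 \<le> 98697/10000" by (simp add: power2_eq_square)
qed

lemma convex_quadratic_le_max:
  fixes D p K l u h :: real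
  assumes "0 \<le> D" "l \<le> u" "u \<le> h"
  shows "D*u^2 - p*u + K \<le> max (D*l^2 - p*l + K) (D*h^2 - p*h + K)"
proof (cases "l = h")
  case True
  with assms show ?thesis by simp
next
  case False
  define Q where "Q x = D*x^2 - p*x + K" for x
  define m where "m = max (Q l) (Q h)"
  have "(h - l) * Q u = (h - u) * Q l + (u - l) * Q h - D * ((u - l) * (h - u)) * (h - l)"
    by (simp add: Q_def algebra_simps power2_eq_square)
  also have "\<dots> \<le> (h - u) * m + (u - l) * m"
  proof -
    have "(h - u) * Q l \<le> (h - u) * m" "(u - l) * Q h \<le> (u - l) * m"
      using assms by (intro mult_left_mono; simp add: m_def)+
    moreover have "0 \<le> D * ((u - l) * (h - u)) * (h - l)" using assms by simp
    ultimately show ?thesis by linarith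
  qed
  finally have "(h - l) * Q u \<le> (h - l) * m" by (simp add: algebra_simps)
  then have "Q u \<le> m" using assms False by (simp add: mult_le_cancel_left)
  then show ?thesis by (simp add: Q_def m_def)
qed

lemma sin_ge_taylor7:
  fixes t :: real assumes "0 \<le> t" "t \<le> 10"
  shows "t - t^3/6 + t^5/120 - t^7/5040 \<le> sin t"
proof -
  have fact10: "(fact 10 :: real) = 3628800" by (simp add: fact_numeral)
  have taylor: "(\<Sum>m<10. sin_coeff m * t ^ m) = t - t^3/6 + t^5/120 - t^7/5040 + t^9/362880"
    by (simp add: sin_coeff_def lessThan_nat_numeral fact_numeral)
  have "\<bar>sin t - (\<Sum>m<10. sin_coeff m * t ^ m)\<bar> \<le> inverse (fact 10) * \<bar>t\<bar> ^ 10"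
    by (rule Maclaurin_sin_bound)
  also have "\<dots> = t^10 / 3628800" using assms by (simp add: field_simps fact10)
  finally have "t - t^3/6 + t^5/120 - t^7/5040 + t^9/362880 - t^10 / 3628800 \<le> sin t"
    unfolding taylor abs_le_iff by linarith
  moreover have "t^10 / 3628800 \<le> t^9 / 362880"
  proof -
    have "t * t^9 \<le> 10 * t^9" using assms by (intro mult_right_mono) auto
    moreover have "t^10 = t * t^9"
      by (simp add: power_add[symmetric] power_Suc[symmetric] del: power_Suc)
    ultimately show ?thesis by simp
  qed
  ultimately show ?thesis by linarith
qed

(* The polynomial is (S t * (1 + c*t) - t) / t^2, where S is the Taylor polynomial of sin of
   degree 7; on [a, b] each monomial is bounded by its value at an endpoint. *)
lemma sin_gap_poly_lower_bound:
  fixes a b c t :: real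
  assumes "0 \<le> c" "0 \<le> a" "a \<le> t" "t \<le> b"
    and "0 \<le> c - b/6 - c*b^2/6 + a^3/120 + c*a^4/120 - b^5/5040 - c*b^6/5040"
  shows "0 \<le> c - t/6 - c*t^2/6 + t^3/120 + c*t^4/120 - t^5/5040 - c*t^6/5040"
proof -
  have "a^3 \<le> t^3" "a^4 \<le> t^4" "t^2 \<le> b^2" "t^5 \<le> b^5" "t^6 \<le> b^6"
    using assms by (auto intro: power_mono)
  then have "c*a^4 \<le> c*t^4" "c*t^2 \<le> c*b^2" "c*t^6 \<le> c*b^6"
    using assms(1) by (auto intro: mult_left_mono)
  with \<open>a^3 \<le> t^3\<close> \<open>t^5 \<le> b^5\<close> assms show ?thesis by linarith
qed

lemma le_taylor_sin7_mult:
  fixes t :: real assumes "0 < t" "t \<le> pi/2"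
  shows "t \<le> (t - t^3/6 + t^5/120 - t^7/5040) * (1 + inv_sinh_gap_bound * t)"
proof -
  define c where "c = inv_sinh_gap_bound"
  have "t \<le> 3927/2500" using assms pi_bounds by linarith
  then have "0 \<le> c - t/6 - c*t^2/6 + t^3/120 + c*t^4/120 - t^5/5040 - c*t^6/5040"
  proof (cases "t \<le> 7/5")
    case True
    with assms(1) show ?thesis
      by (intro sin_gap_poly_lower_bound[where a = 0 and b = "7/5"])
        (auto simp: c_def inv_sinh_gap_bound_def power_divide)
  next
    case False
    with \<open>t \<le> 3927/2500\<close> show ?thesis
      by (intro sin_gap_poly_lower_bound[where a = "7/5" and b = "3927/2500"])
        (auto simp: c_def inv_sinh_gap_bound_def power_divide)
  qed
  then have "0 \<le> t^2 * (c - t/6 - c*t^2/6 + t^3/120 + c*t^4/120 - t^5/5040 - c*t^6/5040)"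
    by simp
  also have "\<dots> = (t - t^3/6 + t^5/120 - t^7/5040) * (1 + c * t) - t"
    by (simp add: field_simps eval_nat_numeral)
  finally show ?thesis by (simp add: c_def)
qed

lemma abs_inv_sin_minus_inv_le:
  fixes t :: real assumes "t \<noteq> 0" "\<bar>t\<bar> \<le> pi/2"
  shows "\<bar>1/sin t - 1/t\<bar> \<le> inv_sinh_gap_bound"
proof -
  have pos: "\<bar>1/sin t - 1/t\<bar> \<le> inv_sinh_gap_bound" if "0 < t" "t \<le> pi/2" for t :: real
  proof -
    have "0 < sin t" using that by (intro sin_gt_zero) auto
    moreover have "sin t \<le> t" using that by (simp add: sin_x_le_x)
    moreover have "t \<le> sin t * (1 + inv_sinh_gap_bound * t)"
    proof -
      have "t - t^3/6 + t^5/120 - t^7/5040 \<le> sin t"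
        using that pi_bounds by (intro sin_ge_taylor7) auto
      then have "(t - t^3/6 + t^5/120 - t^7/5040) * (1 + inv_sinh_gap_bound * t)
          \<le> sin t * (1 + inv_sinh_gap_bound * t)"
        using that by (intro mult_right_mono) (auto simp: inv_sinh_gap_bound_def)
      with le_taylor_sin7_mult[OF that] show ?thesis by linarith
    qed
    ultimately show ?thesis using that by (simp add: field_simps)
  qed
  show ?thesis
  proof (cases "0 < t")
    case True with pos assms show ?thesis by simp
  next
    case False
    with assms have "\<bar>1/sin (-t) - 1/(-t)\<bar> \<le> inv_sinh_gap_bound" by (intro pos) auto
    then show ?thesis by (simp add: abs_minus_commute)
  qed
qed

lemma one_plus_half_square_le_cosh: "1 + s^2/2 \<le> cosh s" for s :: real
proof -
  have "\<bar>s/2\<bar> \<le> \<bar>sinh (s/2)\<bar>" using real_le_abs_sinh[of "s/2"] by (simp add: sinh_def exp_minus)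
  then have "(s/2)^2 \<le> sinh (s/2) ^ 2" by (metis abs_le_square_iff)
  moreover have "cosh s = 1 + 2 * sinh (s/2) ^ 2"
    using cosh_double[of "s/2"] cosh_square_eq[of "s/2"] by simp
  ultimately show ?thesis by (simp add: power2_eq_square)
qed

lemma cosh_2_le_4: "cosh (2::real) \<le> 4"
proof -
  have "exp (1::real) \<le> 27183/10000" using abs_le_D1[OF e_approx_32] by simp
  then have "exp 1 * exp 1 \<le> 27183/10000 * (27183/10000 :: real)" by (intro mult_mono) auto
  then have "exp (2::real) \<le> 27183/10000 * (27183/10000)" by (simp flip: exp_add)
  moreover have "exp (-2::real) \<le> 1/3"
    using exp_ge_add_one_self[of "2::real"] by (simp add: exp_minus field_simps)
  ultimately show ?thesis by (simp add: cosh_def)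
qed

(* On the edge z = s +- i pi/2 one has
   |1/sinh z - 1/z|^2 = inv_sinh_gap_bound^2 + top_edge_quadratic s (1/cosh s) / (s^2 + pi^2/4).
   The quadratic is convex in u, and 1/cosh s lies between 1/4 (if s <= 2) or 0 (if s >= 2) and
   1/(1 + s^2/2), so it suffices to check its sign at these endpoints. *)
definition top_edge_quadratic :: "real \<Rightarrow> real \<Rightarrow> real" where
  "top_edge_quadratic s u =
     (s^2 + pi^2/4) * u^2 - pi * u + 1 - inv_sinh_gap_bound^2 * (s^2 + pi^2/4)"

lemma top_edge_quadratic_at_cosh_bound: "top_edge_quadratic s (1/(1 + s^2/2)) \<le> 0"
proof -
  define y where "y = s^2"
  define c where "c = inv_sinh_gap_bound"
  define k where "k = pi^2/4"
  have y: "0 \<le> y" by (simp add: y_def)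
  have k: "98695/40000 \<le> k" "k \<le> 98697/40000" using pi_squared_bounds by (simp_all add: k_def)
  have coeffs: "k - pi + 1 - c^2*k \<le> 0" "2 - pi/2 - c^2*k - c^2 \<le> 0" "(1 - c^2*k)/4 - c^2 \<le> 0"
    using k pi_bounds by (simp_all add: c_def inv_sinh_gap_bound_def power2_eq_square)
  define m where "m = 1 + y/2"
  have hm: "1/m * m = 1" using y by (simp add: m_def)
  have "top_edge_quadratic s (1/m) * m^2
      = (y + k) * (1/m * m)^2 - pi * (1/m * m) * m + (1 - c^2 * (y + k)) * m^2"
    by (simp add: top_edge_quadratic_def c_def k_def y_def algebra_simps power2_eq_square)
  also have "\<dots> = (k - pi + 1 - c^2*k) + y*(2 - pi/2 - c^2*k - c^2)
      + y^2*((1 - c^2*k)/4 - c^2) - y^3*c^2/4"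
    unfolding hm by (simp add: m_def field_simps power2_eq_square power3_eq_cube)
  also have "\<dots> \<le> 0"
  proof -
    have "y*(2 - pi/2 - c^2*k - c^2) \<le> 0" "y^2*((1 - c^2*k)/4 - c^2) \<le> 0"
      using coeffs y by (auto intro: mult_nonneg_nonpos)
    moreover have "0 \<le> y^3*c^2/4" using y by simp
    ultimately show ?thesis using coeffs(1) by linarith
  qed
  finally have "top_edge_quadratic s (1/m) * m^2 \<le> 0" .
  moreover have "0 < m^2" using y by (simp add: m_def)
  ultimately show ?thesis by (simp add: m_def y_def mult_le_0_iff)
qed

lemma top_edge_quadratic_le_max:
  assumes "l \<le> u" "u \<le> h"
  shows "top_edge_quadratic s u \<le> max (top_edge_quadratic s l) (top_edge_quadratic s h)"
  using convex_quadratic_le_max[OF _ assms, of "s^2 + pi^2/4" pi "1 - inv_sinh_gap_bound^2 * (s^2 + pi^2/4)"]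
  by (simp add: top_edge_quadratic_def algebra_simps)

lemma top_edge_quadratic_at_inv_cosh:
  fixes s :: real assumes "0 \<le> s"
  shows "top_edge_quadratic s (1 / cosh s) \<le> 0"
proof -
  have upper: "1 / cosh s \<le> 1 / (1 + s^2/2)"
    using one_plus_half_square_le_cosh[of s] by (intro divide_left_mono) (auto simp: add_pos_nonneg)
  have c2: "1/16 + 109/1000 \<le> inv_sinh_gap_bound^2"
    by (simp add: inv_sinh_gap_bound_def power2_eq_square)
  have D: "98695/40000 \<le> s^2 + pi^2/4"
    using pi_squared_bounds zero_le_power2[of s] by linarith
  show ?thesis
  proof (cases "s \<le> 2")
    case True
    with assms have "cosh s \<le> cosh 2" by (simp add: cosh_real_nonneg_le_iff)
    then have "cosh s \<le> 4" using cosh_2_le_4 by linarith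
    then have lower: "1/4 \<le> 1 / cosh s" by (intro divide_left_mono) auto
    have "top_edge_quadratic s (1/4) \<le> 0"
    proof -
      have "top_edge_quadratic s (1/4)
          = (s^2 + pi^2/4) * (1/16 - inv_sinh_gap_bound^2) + (1 - pi/4)"
        by (simp add: top_edge_quadratic_def algebra_simps power2_eq_square)
      also have "\<dots> \<le> (s^2 + pi^2/4) * (-109/1000) + (1 - pi/4)"
        using c2 by (intro add_right_mono mult_left_mono) auto
      also have "\<dots> \<le> (98695/40000) * (-109/1000) + (1 - pi/4)"
        using D by (intro add_right_mono mult_right_mono_neg) auto
      finally show ?thesis using pi_bounds by simp
    qed
    then show ?thesis
      using top_edge_quadratic_le_max[OF lower upper, of s] top_edge_quadratic_at_cosh_bound[of s]
      by (auto simp: le_max_iff_disj)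
  next
    case False
    then have "4 \<le> s^2" using power_mono[of 2 s 2] by simp
    then have "(1/16 + 109/1000) * (4 + 98695/40000) \<le> inv_sinh_gap_bound^2 * (s^2 + pi^2/4)"
      using c2 pi_squared_bounds by (intro mult_mono) auto
    then have "top_edge_quadratic s 0 \<le> 0" by (simp add: top_edge_quadratic_def)
    moreover have lower: "0 \<le> 1 / cosh s" by simp
    ultimately show ?thesis
      using top_edge_quadratic_le_max[OF lower upper, of s] top_edge_quadratic_at_cosh_bound[of s]
      by (auto simp: le_max_iff_disj)
  qed
qed

lemma norm_inv_sinh_minus_inv_imaginary_axis:
  fixes z :: complex assumes "Re z = 0" "z \<noteq> 0" "\<bar>Im z\<bar> \<le> pi/2"
  shows "cmod (1/sinh z - 1/z) \<le> inv_sinh_gap_bound"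
proof -
  define t where "t = Im z"
  have "t \<noteq> 0" using assms by (simp add: t_def complex_eq_iff)
  have inv_i: "1 / (\<i> * complex_of_real x) = - \<i> * of_real (1/x)" for x :: real
    by (simp add: divide_complex_def)
  have z: "z = \<i> * of_real t" using assms(1) by (simp add: t_def complex_eq_iff)
  have sinh: "sinh z = \<i> * of_real (sin t)"
    unfolding z by (simp add: complex_eq_iff Re_sinh_complex Im_sinh_complex)
  have "1/sinh z - 1/z = - \<i> * of_real (1/sin t - 1/t)"
    unfolding sinh unfolding z inv_i by (simp add: algebra_simps)
  then have "cmod (1/sinh z - 1/z) = \<bar>1/sin t - 1/t\<bar>"
    by (simp only: norm_mult norm_minus_cancel norm_ii norm_of_real) simp
  with abs_inv_sin_minus_inv_le[OF \<open>t \<noteq> 0\<close>] assms(3) show ?thesis by (simp add: t_def)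
qed

lemma norm_inv_sinh_minus_inv_horizontal_edge:
  fixes z :: complex assumes "0 \<le> Re z" "\<bar>Im z\<bar> = pi/2"
  shows "cmod (1/sinh z - 1/z) \<le> inv_sinh_gap_bound"
proof -
  define s where "s = Re z"
  define \<sigma> :: real where "\<sigma> = sgn (Im z)"
  define D where "D = s^2 + pi^2/4"
  have \<sigma>: "\<sigma> = 1 \<or> \<sigma> = -1" using assms(2) pi_gt_zero by (auto simp: \<sigma>_def sgn_if)
  have Im: "Im z = \<sigma> * (pi/2)" using assms(2) by (auto simp: \<sigma>_def sgn_if abs_if)
  have "sin (Im z) = \<sigma>" "cos (Im z) = 0" unfolding Im using \<sigma> by auto
  then have sinh: "sinh z = Complex 0 (\<sigma> * cosh s)"
    by (simp add: complex_eq_iff Re_sinh_complex Im_sinh_complex s_def)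
  have D: "0 < D" "Re z ^ 2 + Im z ^ 2 = D"
    unfolding Im using \<sigma> by (auto simp: D_def s_def power_mult_distrib power_divide add_nonneg_pos)
  have "\<sigma>^2 = 1" using \<sigma> by auto
  have re: "Re (1/sinh z - 1/z) = - s / D"
    using D by (simp add: sinh Re_divide cmod_power2 s_def)
  have im: "Im (1/sinh z - 1/z) = \<sigma> * (pi/(2*D) - 1/cosh s)"
    using D \<open>\<sigma>^2 = 1\<close> by (simp add: sinh Im_divide cmod_power2 Im power2_eq_square field_simps)
  have "cmod (1/sinh z - 1/z) ^ 2 = (s/D)^2 + (pi/(2*D) - 1/cosh s)^2"
    unfolding cmod_power2 re im using \<open>\<sigma>^2 = 1\<close> by (simp add: power_mult_distrib power_divide)
  also have "\<dots> = (s^2 + pi^2/4) / D^2 - pi * (1/cosh s) / D + (1/cosh s)^2"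
    using D by (simp add: power2_eq_square field_simps)
  also have "\<dots> = inv_sinh_gap_bound^2 + top_edge_quadratic s (1/cosh s) / D"
    unfolding top_edge_quadratic_def D_def[symmetric] using D
    by (simp add: power2_eq_square field_simps)
  also have "\<dots> \<le> inv_sinh_gap_bound^2"
    using top_edge_quadratic_at_inv_cosh[of s] assms(1) D by (simp add: s_def divide_nonpos_pos)
  finally show ?thesis
    by (rule power2_le_imp_le) (simp add: inv_sinh_gap_bound_def)
qed

lemma norm_inv_sinh_minus_inv_far_right:
  fixes z :: complex assumes "5 \<le> Re z"
  shows "cmod (1/sinh z - 1/z) \<le> inv_sinh_gap_bound"
proof -
  have "5 \<le> cmod (sinh z)" using Re_le_norm_sinh[of z] assms by simp
  moreover have "5 \<le> cmod z" using complex_Re_le_cmod[of z] assms by simp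
  ultimately have "1 / cmod (sinh z) \<le> 1/5" "1 / cmod z \<le> 1/5"
    by (simp_all add: divide_le_eq)
  moreover have "cmod (1/sinh z - 1/z) \<le> 1 / cmod (sinh z) + 1 / cmod z"
    using norm_triangle_ineq4[of "1/sinh z" "1/z"] by (simp add: norm_divide)
  ultimately show ?thesis by (simp add: inv_sinh_gap_bound_def)
qed

lemma ex_lim_inv_sinh_minus_inv_at_0: "\<exists>L. ((\<lambda>y::complex. 1/sinh y - 1/y) \<longlongrightarrow> L) (at 0)"
proof -
  define q where "q y = (if y = 0 then 1 else sinh y / y)" for y :: complex
  have "(sinh has_field_derivative 1) (at (0::complex))" by (auto intro!: derivative_eq_intros)
  then have "((\<lambda>y::complex. sinh y / y) \<longlongrightarrow> 1) (at 0)" by (simp add: has_field_derivative_iff)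
  moreover have "(\<lambda>y::complex. sinh y / y) holomorphic_on UNIV - {0}"
    by (intro holomorphic_intros holomorphic_on_sinh) auto
  ultimately have hol: "q holomorphic_on UNIV"
    unfolding q_def by (intro removable_singularity[OF _ open_UNIV])
  then have "q field_differentiable (at 0)" by (rule holomorphic_on_imp_differentiable_at) auto
  then obtain q' where "(q has_field_derivative q') (at 0)" by (auto simp: field_differentiable_def)
  then have diff: "((\<lambda>y. (q y - 1) / y) \<longlongrightarrow> q') (at 0)"
    by (simp add: has_field_derivative_iff q_def)
  have "isCont q 0"
    using holomorphic_on_imp_continuous_on[OF hol] by (simp add: continuous_on_eq_continuous_at)
  then have cont: "(q \<longlongrightarrow> 1) (at 0)" by (simp add: isCont_def q_def)
  from diff cont have lim: "((\<lambda>y. - ((q y - 1) / y) / q y) \<longlongrightarrow> - q' / 1) (at 0)"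
    by (intro tendsto_intros) simp_all
  have ev: "eventually (\<lambda>y. - ((q y - 1) / y) / q y = 1/sinh y - 1/y) (at (0::complex))"
  proof (rule eventually_mono)
    show "eventually (\<lambda>y. y \<in> ball 0 1 - {0}) (at (0::complex))"
      by (intro eventually_at_in_open) auto
  next
    fix y :: complex assume y: "y \<in> ball 0 1 - {0}"
    then have "\<bar>Im y\<bar> < pi" using abs_Im_le_cmod[of y] pi_gt3 by simp
    with y have "sinh y \<noteq> 0" by (intro sinh_complex_nonzero) auto
    with y show "- ((q y - 1) / y) / q y = 1/sinh y - 1/y" by (simp add: q_def field_simps)
  qed
  show ?thesis using Lim_transform_eventually[OF lim ev] by blast
qed

definition inv_sinh_gap :: "complex \<Rightarrow> complex" where
  "inv_sinh_gap z = (if z = 0 then Lim (at 0) (\<lambda>y. 1/sinh y - 1/y) else 1/sinh z - 1/z)"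

lemma tendsto_inv_sinh_gap_0: "((\<lambda>y. 1/sinh y - 1/y) \<longlongrightarrow> inv_sinh_gap 0) (at 0)"
  using ex_lim_inv_sinh_minus_inv_at_0 tendsto_Lim[OF at_neq_bot]
  by (auto simp: inv_sinh_gap_def)

lemma holomorphic_on_inv_sinh_gap: "inv_sinh_gap holomorphic_on {z. \<bar>Im z\<bar> < pi}"
proof -
  have "open {z::complex. \<bar>Im z\<bar> < pi}" by (intro open_Collect_less continuous_intros)
  moreover have "(\<lambda>y. 1/sinh y - 1/y) holomorphic_on {z. \<bar>Im z\<bar> < pi} - {0}"
    by (intro holomorphic_intros holomorphic_on_sinh) (auto dest: sinh_complex_nonzero)
  ultimately show ?thesis
    using removable_singularity tendsto_inv_sinh_gap_0
    by (simp add: inv_sinh_gap_def[abs_def] if_distrib)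
qed

lemma norm_inv_sinh_gap_0: "cmod (inv_sinh_gap 0) \<le> inv_sinh_gap_bound"
proof -
  have "filterlim (\<lambda>t::real. \<i> * of_real t) (at 0) (at_right 0)"
    by (intro filterlim_atI tendsto_eq_intros) (auto simp: eventually_at_filter)
  then have "((\<lambda>t. 1/sinh (\<i> * of_real t) - 1/(\<i> * of_real t)) \<longlongrightarrow> inv_sinh_gap 0) (at_right 0)"
    by (rule filterlim_compose[OF tendsto_inv_sinh_gap_0])
  moreover have "eventually (\<lambda>t::real. t \<in> {0<..<pi/2}) (at_right 0)"
    by (intro eventually_at_right_real) auto
  then have "eventually (\<lambda>t::real. cmod (1/sinh (\<i> * of_real t) - 1/(\<i> * of_real t))
      \<le> inv_sinh_gap_bound) (at_right 0)"
    by eventually_elim (intro norm_inv_sinh_minus_inv_imaginary_axis; simp)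
  ultimately show ?thesis by (intro Lim_norm_ubound) auto
qed

lemma norm_inv_sinh_gap_le:
  assumes "z \<in> half_strip"
  shows "cmod (inv_sinh_gap z) \<le> inv_sinh_gap_bound"
proof (cases "5 \<le> Re z")
  case True
  then have "z \<noteq> 0" by auto
  with True show ?thesis by (simp add: inv_sinh_gap_def norm_inv_sinh_minus_inv_far_right)
next
  case False
  define R where "R = cbox (Complex 0 (-pi/2)) (Complex 5 (pi/2))"
  have "R \<subseteq> {z. \<bar>Im z\<bar> < pi}"
    by (auto simp: R_def in_cbox_complex_iff abs_less_iff) (use pi_gt_zero in linarith)+
  then have hol: "inv_sinh_gap holomorphic_on R"
    using holomorphic_on_inv_sinh_gap by (rule holomorphic_on_subset[rotated])
  have frontier: "cmod (inv_sinh_gap w) \<le> inv_sinh_gap_bound" if "w \<in> frontier R" for w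
  proof -
    have w: "0 \<le> Re w" "\<bar>Im w\<bar> \<le> pi/2" and "Re w = 0 \<or> Re w = 5 \<or> \<bar>Im w\<bar> = pi/2"
      using that by (auto simp: R_def frontier_cbox in_cbox_complex_iff in_box_complex_iff)
    then consider "Re w = 0" | "Re w = 5" | "\<bar>Im w\<bar> = pi/2" by blast
    then show ?thesis
    proof cases
      case 1
      show ?thesis
      proof (cases "w = 0")
        case True
        then show ?thesis using norm_inv_sinh_gap_0 by simp
      next
        case False
        have "cmod (1/sinh w - 1/w) \<le> inv_sinh_gap_bound"
          using 1 False w(2) by (rule norm_inv_sinh_minus_inv_imaginary_axis)
        with False show ?thesis by (simp add: inv_sinh_gap_def)
      qed
    next
      case 2
      then have "w \<noteq> 0" by auto
      moreover have "cmod (1/sinh w - 1/w) \<le> inv_sinh_gap_bound"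
        using 2 by (intro norm_inv_sinh_minus_inv_far_right) simp
      ultimately show ?thesis by (simp add: inv_sinh_gap_def)
    next
      case 3
      then have "w \<noteq> 0" using pi_gt_zero by (auto simp: complex_eq_iff)
      moreover have "cmod (1/sinh w - 1/w) \<le> inv_sinh_gap_bound"
        using w(1) 3 by (rule norm_inv_sinh_minus_inv_horizontal_edge)
      ultimately show ?thesis by (simp add: inv_sinh_gap_def)
    qed
  qed
  have "inv_sinh_gap holomorphic_on interior R"
    using hol interior_subset by (rule holomorphic_on_subset)
  moreover have "continuous_on (closure R) inv_sinh_gap"
    using holomorphic_on_imp_continuous_on[OF hol] by (simp add: R_def)
  moreover have "bounded R" by (simp add: R_def)
  moreover have "z \<in> R" using assms False by (auto simp: R_def half_strip_def in_cbox_complex_iff)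
  ultimately show ?thesis using maximum_modulus_frontier frontier by blast
qed

section \<open>Comparison of z/(1+z) at a and at sinh a\<close>

lemma one_le_norm_one_plus_inverse:
  fixes w :: complex assumes "0 \<le> Re w"
  shows "1 \<le> cmod (1 + 1/w)"
proof -
  have "0 \<le> Re (1/w)" using assms by (simp add: Re_divide)
  then show ?thesis using complex_Re_le_cmod[of "1 + 1/w"] by simp
qed

lemma norm_frac_le_if_norm_inverse_diff_le:
  fixes a w :: complex and d :: real
  assumes "a \<noteq> 0" "0 \<le> Re a" "0 \<le> Re w" and close: "cmod (1/a - 1/w) \<le> d"
  shows "cmod (w/(1+w)) \<le> (1 + d) * cmod (a/(1+a))"
proof -
  have d: "0 \<le> d" using close norm_ge_zero order_trans by blast
  show ?thesis
  proof (cases "w = 0")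
    case True
    with d show ?thesis by simp
  next
    case False
    have frac: "cmod (x/(1+x)) = 1 / cmod (1 + 1/x)" if "x \<noteq> 0" for x :: complex
      using that by (simp add: norm_divide field_simps)
    have w1: "1 \<le> cmod (1 + 1/w)" and a1: "1 \<le> cmod (1 + 1/a)"
      using assms by (simp_all add: one_le_norm_one_plus_inverse)
    have "cmod (1 + 1/a) \<le> cmod (1 + 1/w) + cmod (1/a - 1/w)"
      using norm_triangle_ineq[of "1 + 1/w" "1/a - 1/w"] by simp
    also have "\<dots> \<le> cmod (1 + 1/w) + d * cmod (1 + 1/w)"
      using close mult_left_mono[OF w1 d] by simp
    finally have "cmod (1 + 1/a) \<le> (1 + d) * cmod (1 + 1/w)" by (simp add: algebra_simps)
    moreover have "1/P \<le> (1 + d) * (1/Q)" if "Q \<le> (1 + d) * P" "1 \<le> P" "1 \<le> Q" for P Q :: real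
      using that by (simp add: field_simps)
    ultimately show ?thesis
      unfolding frac[OF False] frac[OF assms(1)] using w1 a1 by blast
  qed
qed

lemma arsinh_le_self:
  fixes x :: real assumes "0 \<le> x"
  shows "arsinh x \<le> x"
proof -
  have "0 \<le> arsinh x" using assms arsinh_real_neg_iff[of x] by linarith
  then show ?thesis using real_le_sinh[of "arsinh x"] by simp
qed

lemma frac_one_plus_mono: "0 \<le> x \<Longrightarrow> x \<le> y \<Longrightarrow> x / (1 + x) \<le> y / (1 + y)" for x y :: real
  by (simp add: field_simps)

theorem lemma4:
  shows "(\<forall>\<zeta>::complex. \<bar>Im \<zeta>\<bar> \<le> pi / 2 \<longrightarrow>
            (1 / sqrt 2) * cmod (exp \<zeta> / (1 + exp \<zeta>))
              \<le> cmod (arcsinh_exp \<zeta> / (1 + arcsinh_exp \<zeta>))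
          \<and> cmod (arcsinh_exp \<zeta> / (1 + arcsinh_exp \<zeta>))
              \<le> sqrt 2 * cmod (exp \<zeta> / (1 + exp \<zeta>)))
       \<and> (\<forall>x::real. arsinh (exp x) / (1 + arsinh (exp x)) \<le> exp x / (1 + exp x))"
proof (intro conjI allI impI)
  fix \<zeta> :: complex assume strip: "\<bar>Im \<zeta>\<bar> \<le> pi / 2"
  define a where "a = arcsinh_exp \<zeta>"
  define w where "w = exp \<zeta>"
  have a: "a \<in> half_strip" "sinh a = w"
    using arcsinh_exp_in_half_strip[OF strip] by (simp_all add: a_def w_def)
  have "0 \<le> cos (Im \<zeta>)" using strip by (intro cos_ge_zero) (auto simp: abs_le_iff)
  then have "w \<noteq> 0" "0 \<le> Re w" by (simp_all add: w_def Re_exp)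
  moreover from a \<open>w \<noteq> 0\<close> have "a \<noteq> 0" "0 \<le> Re a" by (auto simp: half_strip_def)
  moreover have "cmod (1/w - 1/a) \<le> inv_sinh_gap_bound"
    using norm_inv_sinh_gap_le[OF a(1)] a(2) \<open>a \<noteq> 0\<close> by (simp add: inv_sinh_gap_def)
  ultimately have "cmod (w/(1+w)) \<le> (1 + inv_sinh_gap_bound) * cmod (a/(1+a))"
    and "cmod (a/(1+a)) \<le> (1 + inv_sinh_gap_bound) * cmod (w/(1+w))"
    by (auto intro!: norm_frac_le_if_norm_inverse_diff_le simp: norm_minus_commute)
  then have "cmod (w/(1+w)) \<le> sqrt 2 * cmod (a/(1+a))"
    and "cmod (a/(1+a)) \<le> sqrt 2 * cmod (w/(1+w))"
    using one_plus_inv_sinh_gap_bound_le_sqrt2 by (auto elim!: order_trans intro!: mult_right_mono)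
  then show "(1 / sqrt 2) * cmod (exp \<zeta> / (1 + exp \<zeta>)) \<le> cmod (a/(1+a))"
    and "cmod (a/(1+a)) \<le> sqrt 2 * cmod (exp \<zeta> / (1 + exp \<zeta>))"
    by (simp_all add: w_def field_simps)
next
  fix x :: real
  show "arsinh (exp x) / (1 + arsinh (exp x)) \<le> exp x / (1 + exp x)"
    using arsinh_le_self[of "exp x"] by (intro frac_one_plus_mono) (simp_all add: less_imp_le)
qed

end
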